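(* Assume that $\Gamma_1$ and $\Gamma_2$ are regular inhomogeneous $Y$-semigroups and that $A_{\Gamma_1}(t)f=A_{\Gamma_2}(t)f$ for all $f \in Y_1$ and all $t \in J$. Then $\Gamma_1(s,t)f=\Gamma_2(s,t)f$ for all $f \in Y_1$ and all $(s,t) \in \Delta_J$. In particular, if $Y_1$ is dense in $Y$, then $\Gamma_1$ and $\Gamma_2$ agree on $Y$.
   Context: Let $(Y,\|\cdot\|)$ be a real separable Banach space and $(Y_1,\|\cdot\|_{Y_1})$ a real separable Banach space continuously embedded in $Y$. $J$ is either $\mathbb{R}^+$ or $[0,T_\infty]$ ($T_\infty>0$), $\Delta_J=\{(s,t)\in J^2:s\le t\}$, $J(s)=\{t\in J:t\ge s\}$. An inhomogeneous $Y$-semigroup is a map $\Gamma:\Delta_J\to\mathcal B(Y)$ with $\Gamma(t,t)=I$ and $\Gamma(s,r)\Gamma(r,t)=\Gamma(s,t)$ for $s\le r\le t$. Generator: for $t\in J$, $\mathcal D(A_\Gamma(t))$ is the set of $f\in Y$ such that $\lim_{h\downarrow0,\,t+h\in J}h^{-1}(\Gamma(t,t+h)-I)f$ and $\lim_{h\downarrow0,\,t-h\in J}h^{-1}(\Gamma(t-h,t)-I)f$ exist in $Y$ and are equal, $A_\Gamma(t)f$ being the common value; $\mathcal D(A_\Gamma)=\bigcap_t\mathcal D(A_\Gamma(t))$. $\Gamma$ is regular if: $Y_1\subseteq\mathcal D(A_\Gamma)$; $\Gamma(s,t)Y_1\subseteq Y_1$ for all $(s,t)\in\Delta_J$ and for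 every $f\in Y_1$, $t\in J$, $u\mapsto\Gamma(u,t)f$ is $\|\cdot\|_{Y_1}$-continuous on $\{u\in J:u\le t\}$; for every $f\in Y$, $s\in J$, $u\mapsto\Gamma(s,u)f$ is continuous from $J(s)$ into $Y$; and for all $(s,t)\in\Delta_J$, $f\in Y_1$, $u\mapsto\Gamma(s,u)A_\Gamma(u)f$ is Bochner integrable on $[s,t]$. *)

theory Defs
  imports "HOL-Analysis.Analysis"
begin

definition time_interval :: "real set \<Rightarrow> bool" where
  "time_interval J \<longleftrightarrow> J = {0..} \<or> (\<exists>T>0. J = {0..T})"

definition inhom_semigroup :: "real set \<Rightarrow> (real \<Rightarrow> real \<Rightarrow> ('a::real_normed_vector \<Rightarrow>\<^sub>L 'a)) \<Rightarrow> bool" where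
  "inhom_semigroup J \<Gamma> \<longleftrightarrow>
     (\<forall>t\<in>J. \<Gamma> t t = id_blinfun) \<and>
     (\<forall>s\<in>J. \<forall>r\<in>J. \<forall>t\<in>J. s \<le> r \<and> r \<le> t \<longrightarrow> \<Gamma> s r o\<^sub>L \<Gamma> r t = \<Gamma> s t)"

definition gen_right_lim :: "real set \<Rightarrow> (real \<Rightarrow> real \<Rightarrow> ('a::real_normed_vector \<Rightarrow>\<^sub>L 'a)) \<Rightarrow> real \<Rightarrow> 'a \<Rightarrow> 'a \<Rightarrow> bool" where
  "gen_right_lim J \<Gamma> t f L \<longleftrightarrow>
     ((\<lambda>h. (1 / h) *\<^sub>R (blinfun_apply (\<Gamma> t (t + h)) f - f)) \<longlongrightarrow> L)
       (at 0 within {h. 0 < h \<and> t + h \<in> J})"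

definition gen_left_lim :: "real set \<Rightarrow> (real \<Rightarrow> real \<Rightarrow> ('a::real_normed_vector \<Rightarrow>\<^sub>L 'a)) \<Rightarrow> real \<Rightarrow> 'a \<Rightarrow> 'a \<Rightarrow> bool" where
  "gen_left_lim J \<Gamma> t f L \<longleftrightarrow>
     ((\<lambda>h. (1 / h) *\<^sub>R (blinfun_apply (\<Gamma> (t - h) t) f - f)) \<longlongrightarrow> L)
       (at 0 within {h. 0 < h \<and> t - h \<in> J})"

text \<open>f \<in> D(A_\<Gamma>(t)): both one-sided limits exist (where meaningful) and are equal.\<close>
definition gen_dom :: "real set \<Rightarrow> (real \<Rightarrow> real \<Rightarrow> ('a::real_normed_vector \<Rightarrow>\<^sub>L 'a)) \<Rightarrow> real \<Rightarrow> 'a \<Rightarrow> bool" where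
  "gen_dom J \<Gamma> t f \<longleftrightarrow> (\<exists>L. gen_right_lim J \<Gamma> t f L \<and> gen_left_lim J \<Gamma> t f L)"

definition gen :: "real set \<Rightarrow> (real \<Rightarrow> real \<Rightarrow> ('a::real_normed_vector \<Rightarrow>\<^sub>L 'a)) \<Rightarrow> real \<Rightarrow> 'a \<Rightarrow> 'a" where
  "gen J \<Gamma> t f = (SOME L. gen_right_lim J \<Gamma> t f L \<and> gen_left_lim J \<Gamma> t f L)"

text \<open>Regularity w.r.t. Y1, given as a Banach space 'b continuously and injectively
  embedded in Y via i.\<close>
definition regular_semigroup ::
  "real set \<Rightarrow> ('b::real_normed_vector \<Rightarrow> 'a::{banach,second_countable_topology})
     \<Rightarrow> (real \<Rightarrow> real \<Rightarrow> ('a \<Rightarrow>\<^sub>L 'a)) \<Rightarrow> bool" where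
  "regular_semigroup J i \<Gamma> \<longleftrightarrow>
     inhom_semigroup J \<Gamma> \<and>
     (\<forall>t\<in>J. \<forall>x. gen_dom J \<Gamma> t (i x)) \<and>
     (\<forall>s\<in>J. \<forall>t\<in>J. s \<le> t \<longrightarrow> (\<forall>x. blinfun_apply (\<Gamma> s t) (i x) \<in> range i)) \<and>
     (\<forall>t\<in>J. \<forall>x. \<exists>g. continuous_on {u\<in>J. u \<le> t} g \<and>
          (\<forall>u\<in>{u\<in>J. u \<le> t}. i (g u) = blinfun_apply (\<Gamma> u t) (i x))) \<and>
     (\<forall>s\<in>J. \<forall>f. continuous_on {u\<in>J. s \<le> u} (\<lambda>u. blinfun_apply (\<Gamma> s u) f)) \<and>
     (\<forall>s\<in>J. \<forall>t\<in>J. s \<le> t \<longrightarrow> (\<forall>x.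
          set_integrable lborel {s..t} (\<lambda>u. blinfun_apply (\<Gamma> s u) (gen J \<Gamma> u (i x)))))"

end

theory Submission
  imports Defs
begin

text \<open>For f in Y1 and s \<le> t the interpolant u \<mapsto> \<Gamma>1(s,u) \<Gamma>2(u,t) f has derivative zero on [s,t]:
  on either side of u its difference quotient is an operator of one of the semigroups applied to
  the difference of the generator quotients of \<Gamma>1 and \<Gamma>2 at u, and these quotients have the same
  limit on Y1. As the operator, respectively the vector it acts on, moves with the increment,
  the uniform boundedness principle is what lets one pass to the limit. The interpolant takes
  the value \<Gamma>2(s,t) f at u = s and \<Gamma>1(s,t) f at u = t; continuity of both operators then carries
  the equality over to the closure of Y1.\<close>

lemma uniform_boundedness:
  fixes T :: "'i \<Rightarrow> 'c::banach \<Rightarrow>\<^sub>L 'd::real_normed_vector"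
  assumes bounded_orbits: "\<And>z. bounded (range (\<lambda>n. T n z))"
  shows "\<exists>B. \<forall>n. norm (T n) \<le> B"
proof -
  define E where "E k = {z. \<forall>n. norm (T n z) \<le> real k}" for k :: nat
  have closed_E: "closed (E k)" for k
  proof -
    have "E k = (\<Inter>n. {z. norm (T n z) \<le> real k})" by (auto simp: E_def)
    moreover have "closed {z. norm (T n z) \<le> real k}" for n
      by (intro closed_Collect_le continuous_intros)
    ultimately show ?thesis by auto
  qed
  have covering: "(\<Union>k. E k) = UNIV"
  proof -
    have "z \<in> (\<Union>k. E k)" for z
    proof -
      obtain B where "\<And>n. norm (T n z) \<le> B"
        using bounded_orbits[of z] unfolding bounded_iff by auto
      then have "z \<in> E (nat \<lceil>B\<rceil>)"
        unfolding E_def by (auto intro: order_trans[OF _ real_nat_ceiling_ge])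
      then show ?thesis by auto
    qed
    then show ?thesis by blast
  qed
  have "\<exists>k. interior (E k) \<noteq> {}"
  proof (rule ccontr)
    assume "\<nexists>k. interior (E k) \<noteq> {}"
    then have "euclidean interior_of (\<Union>k. E k) = {}"
      by (intro Baire_category_alt) (auto simp: completely_metrizable_space_euclidean closed_E)
    then show False using covering by simp
  qed
  then obtain k z0 r where r: "r > 0" "ball z0 r \<subseteq> E k"
    using mem_interior by blast
  have operator_bound: "norm (T n w) \<le> (4 * real k / r) * norm w" for n w
  proof (cases "w = 0")
    case False
    define c where "c = r / (2 * norm w)"
    have c: "c > 0" using False r by (simp add: c_def)
    have "z0 + c *\<^sub>R w \<in> ball z0 r" "z0 \<in> ball z0 r"
      using False r by (simp_all add: c_def dist_norm)
    then have "norm (T n (z0 + c *\<^sub>R w)) \<le> real k" "norm (T n z0) \<le> real k"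
      using r(2) unfolding E_def by blast+
    moreover have "T n (c *\<^sub>R w) = T n (z0 + c *\<^sub>R w) - T n z0"
      by (simp add: blinfun.add_right)
    ultimately have "norm (T n (c *\<^sub>R w)) \<le> 2 * real k"
      using norm_triangle_ineq4[of "T n (z0 + c *\<^sub>R w)" "T n z0"] by simp
    then have "c * norm (T n w) \<le> 2 * real k"
      using c by (simp add: blinfun.scaleR_right)
    then have "norm (T n w) \<le> 2 * real k / c" using c by (simp add: field_simps)
    also have "\<dots> = (4 * real k / r) * norm w" using r False by (simp add: c_def field_simps)
    finally show ?thesis .
  qed simp
  show ?thesis
    using r by (intro exI[of _ "4 * real k / r"] allI norm_blinfun_bound operator_bound) auto
qed

lemma tendsto_blinfun_apply_pointwise:
  fixes T :: "nat \<Rightarrow> 'c::banach \<Rightarrow>\<^sub>L 'd::real_normed_vector"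
  assumes pointwise: "\<And>z. (\<lambda>n. T n z) \<longlonglongrightarrow> L z" and v: "v \<longlonglongrightarrow> v0"
  shows "(\<lambda>n. T n (v n)) \<longlonglongrightarrow> L v0"
proof -
  have "bounded (range (\<lambda>n. T n z))" for z
    using convergent_imp_Bseq[OF convergentI[OF pointwise]] by (simp add: Bseq_eq_bounded)
  then obtain B where B: "\<And>n. norm (T n) \<le> B" using uniform_boundedness by blast
  have "norm (T n (v n) - T n v0) \<le> B * norm (v n - v0)" for n
  proof -
    have "norm (T n (v n) - T n v0) \<le> norm (T n) * norm (v n - v0)"
      using norm_blinfun[of "T n" "v n - v0"] by (simp add: blinfun.diff_right)
    also have "\<dots> \<le> B * norm (v n - v0)" by (rule mult_right_mono[OF B]) simp
    finally show ?thesis .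
  qed
  moreover have "(\<lambda>n. B * norm (v n - v0)) \<longlonglongrightarrow> 0"
    using v by (intro tendsto_mult_right_zero tendsto_norm_zero LIM_zero)
  ultimately have "(\<lambda>n. T n (v n) - T n v0) \<longlonglongrightarrow> 0"
    using Lim_null_comparison[of "\<lambda>n. T n (v n) - T n v0" "\<lambda>n. B * norm (v n - v0)" sequentially]
    by (simp add: always_eventually)
  from tendsto_add[OF pointwise[of v0] this] show ?thesis by simp
qed

lemma gen_left_lim_sequentially:
  assumes "gen_left_lim J \<Gamma> u f L" "\<And>n. 0 < h n" "\<And>n. u - h n \<in> J" "h \<longlonglongrightarrow> 0"
  shows "(\<lambda>n. (1 / h n) *\<^sub>R (\<Gamma> (u - h n) u f - f)) \<longlonglongrightarrow> L"
proof -
  have "\<forall>n. h n \<in> {r. 0 < r \<and> u - r \<in> J} - {0}" using assms(2,3) by auto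
  with assms(1,4) show ?thesis
    unfolding gen_left_lim_def tendsto_at_iff_sequentially comp_def by blast
qed

lemma gen_right_lim_sequentially:
  assumes "gen_right_lim J \<Gamma> u f L" "\<And>n. 0 < h n" "\<And>n. u + h n \<in> J" "h \<longlonglongrightarrow> 0"
  shows "(\<lambda>n. (1 / h n) *\<^sub>R (\<Gamma> u (u + h n) f - f)) \<longlonglongrightarrow> L"
proof -
  have "\<forall>n. h n \<in> {r. 0 < r \<and> u + r \<in> J} - {0}" using assms(2,3) by auto
  with assms(1,4) show ?thesis
    unfolding gen_right_lim_def tendsto_at_iff_sequentially comp_def by blast
qed

lemma regular_semigroup_apply_comp:
  assumes "regular_semigroup J i \<Gamma>" "a \<in> J" "b \<in> J" "c \<in> J" "a \<le> b" "b \<le> c"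
  shows "\<Gamma> a b (\<Gamma> b c y) = \<Gamma> a c y"
proof -
  have "\<Gamma> a b o\<^sub>L \<Gamma> b c = \<Gamma> a c"
    using assms unfolding regular_semigroup_def inhom_semigroup_def by blast
  then show ?thesis by (metis blinfun_apply_blinfun_compose)
qed

lemma regular_semigroup_apply_id:
  "regular_semigroup J i \<Gamma> \<Longrightarrow> a \<in> J \<Longrightarrow> \<Gamma> a a y = y"
  unfolding regular_semigroup_def inhom_semigroup_def by simp

lemma regular_semigroup_gen_lims:
  assumes "regular_semigroup J i \<Gamma>" "u \<in> J"
  shows "gen_right_lim J \<Gamma> u (i y) (gen J \<Gamma> u (i y))"
    and "gen_left_lim J \<Gamma> u (i y) (gen J \<Gamma> u (i y))"
proof -
  have "gen_dom J \<Gamma> u (i y)" using assms unfolding regular_semigroup_def by blast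
  then have "gen_right_lim J \<Gamma> u (i y) (gen J \<Gamma> u (i y)) \<and> gen_left_lim J \<Gamma> u (i y) (gen J \<Gamma> u (i y))"
    unfolding gen_dom_def gen_def by (rule someI_ex)
  then show "gen_right_lim J \<Gamma> u (i y) (gen J \<Gamma> u (i y))" "gen_left_lim J \<Gamma> u (i y) (gen J \<Gamma> u (i y))"
    by blast+
qed

lemma regular_semigroup_range:
  "regular_semigroup J i \<Gamma> \<Longrightarrow> a \<in> J \<Longrightarrow> b \<in> J \<Longrightarrow> a \<le> b \<Longrightarrow> \<Gamma> a b (i y) \<in> range i"
  unfolding regular_semigroup_def by blast

lemma regular_semigroup_Y1_continuous:
  "regular_semigroup J i \<Gamma> \<Longrightarrow> t \<in> J \<Longrightarrow>
    \<exists>g. continuous_on {u\<in>J. u \<le> t} g \<and> (\<forall>u\<in>{u\<in>J. u \<le> t}. i (g u) = \<Gamma> u t (i y))"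
  unfolding regular_semigroup_def by blast

lemma regular_semigroup_continuous:
  "regular_semigroup J i \<Gamma> \<Longrightarrow> s \<in> J \<Longrightarrow> continuous_on {u\<in>J. s \<le> u} (\<lambda>u. \<Gamma> s u f)"
  unfolding regular_semigroup_def by blast

lemma regular_semigroup_right_quotient:
  fixes i :: "'b::banach \<Rightarrow> 'a::{banach,second_countable_topology}"
  assumes reg: "regular_semigroup J i \<Gamma>" and i: "bounded_linear i" and u: "u \<in> J"
    and G: "G \<longlonglongrightarrow> G0" and h: "\<And>n. 0 < h n" "\<And>n. u + h n \<in> J" "h \<longlonglongrightarrow> 0"
  shows "(\<lambda>n. (1 / h n) *\<^sub>R (\<Gamma> u (u + h n) (i (G n)) - i (G n))) \<longlonglongrightarrow> gen J \<Gamma> u (i G0)"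
proof -
  \<comment> \<open>Quotient operators on Y1 itself, so that uniform boundedness absorbs the moving argument G n.\<close>
  define T where "T n = (1 / h n) *\<^sub>R ((\<Gamma> u (u + h n) - id_blinfun) o\<^sub>L Blinfun i)" for n
  have T_apply: "T n y = (1 / h n) *\<^sub>R (\<Gamma> u (u + h n) (i y) - i y)" for n y
    by (simp add: T_def bounded_linear_Blinfun_apply[OF i] blinfun.diff_left scaleR_blinfun.rep_eq
      minus_blinfun.rep_eq)
  have "(\<lambda>n. T n y) \<longlonglongrightarrow> gen J \<Gamma> u (i y)" for y
    unfolding T_apply by (rule gen_right_lim_sequentially[OF regular_semigroup_gen_lims(1)[OF reg u] h])
  from tendsto_blinfun_apply_pointwise[where L="\<lambda>y. gen J \<Gamma> u (i y)", OF this G]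
  show ?thesis by (simp add: T_apply)
qed

lemma regular_semigroups_left_quotient_vanishes:
  assumes r1: "regular_semigroup J i \<Gamma>1" and r2: "regular_semigroup J i \<Gamma>2"
    and same_gen: "\<forall>x. \<forall>t\<in>J. gen J \<Gamma>1 t (i x) = gen J \<Gamma>2 t (i x)"
    and J: "{s..u} \<subseteq> J" "s \<le> u" and g: "g \<in> range i"
  shows "((\<lambda>y. (1 / norm (y - u)) *\<^sub>R (\<Gamma>1 s y (\<Gamma>2 y u g) - \<Gamma>1 s u g)) \<longlongrightarrow> 0)
           (at u within {s..u})"
proof (unfold tendsto_at_iff_sequentially, intro allI impI)
  fix X assume X: "\<forall>n. X n \<in> {s..u} - {u}" and X_lim: "X \<longlonglongrightarrow> u"
  define h where "h n = u - X n" for n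
  have X_J: "X n \<in> J" and X_le: "s \<le> X n" "X n \<le> u" and h_pos: "0 < h n" for n
    using X[rule_format, of n] J by (auto simp: h_def)
  have uJ: "u \<in> J" "s \<in> J" using J by auto
  have h_lim: "h \<longlonglongrightarrow> 0"
    using tendsto_diff[OF tendsto_const[of u] X_lim] unfolding h_def by simp
  have X_h: "u - h n = X n" for n by (simp add: h_def)
  define w where
    "w n = (1 / h n) *\<^sub>R (\<Gamma>2 (X n) u g - g) - (1 / h n) *\<^sub>R (\<Gamma>1 (X n) u g - g)" for n
  obtain y where y: "g = i y" using g by blast
  have quotients: "(\<lambda>n. (1 / h n) *\<^sub>R (\<Gamma> (X n) u g - g)) \<longlonglongrightarrow> gen J \<Gamma> u g"
    if "regular_semigroup J i \<Gamma>" for \<Gamma>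
    using gen_left_lim_sequentially[OF regular_semigroup_gen_lims(2)[OF that uJ(1)] h_pos _ h_lim]
      X_J by (simp add: X_h y)
  have "w \<longlonglongrightarrow> gen J \<Gamma>2 u g - gen J \<Gamma>1 u g"
    unfolding w_def by (intro tendsto_diff quotients r1 r2)
  then have w_lim: "w \<longlonglongrightarrow> 0" using same_gen g uJ by auto
  have "(\<lambda>n. \<Gamma>1 s (X n) z) \<longlonglongrightarrow> \<Gamma>1 s u z" for z
    by (rule continuous_on_tendsto_compose[OF regular_semigroup_continuous[OF r1 uJ(2)] X_lim])
       (use uJ J X_J X_le in auto)
  from tendsto_blinfun_apply_pointwise[OF this w_lim]
  have "(\<lambda>n. \<Gamma>1 s (X n) (w n)) \<longlonglongrightarrow> 0" by simp
  moreover have "(1 / norm (X n - u)) *\<^sub>R (\<Gamma>1 s (X n) (\<Gamma>2 (X n) u g) - \<Gamma>1 s u g)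
                 = \<Gamma>1 s (X n) (w n)" for n
  proof -
    have "\<Gamma>1 s u g = \<Gamma>1 s (X n) (\<Gamma>1 (X n) u g)"
      using regular_semigroup_apply_comp[OF r1 uJ(2) X_J uJ(1) X_le] by simp
    moreover have "norm (X n - u) = h n" using h_pos[of n] by (simp add: h_def)
    ultimately show ?thesis
      by (simp add: w_def blinfun.diff_right blinfun.scaleR_right algebra_simps)
  qed
  ultimately show "((\<lambda>y. (1 / norm (y - u)) *\<^sub>R (\<Gamma>1 s y (\<Gamma>2 y u g) - \<Gamma>1 s u g)) \<circ> X)
                   \<longlonglongrightarrow> 0"
    by (simp add: comp_def)
qed

lemma regular_semigroups_right_quotient_vanishes:
  fixes i :: "'b::banach \<Rightarrow> 'a::{banach,second_countable_topology}"
  assumes i: "bounded_linear i"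
    and r1: "regular_semigroup J i \<Gamma>1" and r2: "regular_semigroup J i \<Gamma>2"
    and same_gen: "\<forall>x. \<forall>t\<in>J. gen J \<Gamma>1 t (i x) = gen J \<Gamma>2 t (i x)"
    and J: "{u..t} \<subseteq> J" "u \<le> t"
  shows "((\<lambda>y. (1 / norm (y - u)) *\<^sub>R (\<Gamma>1 u y (\<Gamma>2 y t (i x)) - \<Gamma>2 u t (i x))) \<longlongrightarrow> 0)
           (at u within {u..t})"
proof (unfold tendsto_at_iff_sequentially, intro allI impI)
  fix X assume X: "\<forall>n. X n \<in> {u..t} - {u}" and X_lim: "X \<longlonglongrightarrow> u"
  define h where "h n = X n - u" for n
  have X_J: "X n \<in> J" and X_le: "u \<le> X n" "X n \<le> t" and h_pos: "0 < h n" for n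
    using X[rule_format, of n] J by (auto simp: h_def)
  have uJ: "u \<in> J" "t \<in> J" using J by auto
  have h_lim: "h \<longlonglongrightarrow> 0"
    using tendsto_diff[OF X_lim tendsto_const[of u]] unfolding h_def by simp
  have X_h: "u + h n = X n" for n by (simp add: h_def)
  obtain G where G_cont: "continuous_on {v\<in>J. v \<le> t} G"
    and G: "\<forall>v\<in>{v\<in>J. v \<le> t}. i (G v) = \<Gamma>2 v t (i x)"
    using regular_semigroup_Y1_continuous[OF r2 uJ(2)] by blast
  have G_lim: "(\<lambda>n. G (X n)) \<longlonglongrightarrow> G u"
    by (rule continuous_on_tendsto_compose[OF G_cont X_lim]) (use uJ J X_J X_le in auto)
  have quotients: "(\<lambda>n. (1 / h n) *\<^sub>R (\<Gamma> u (X n) (i (G (X n))) - i (G (X n))))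
                     \<longlonglongrightarrow> gen J \<Gamma> u (i (G u))" if "regular_semigroup J i \<Gamma>" for \<Gamma>
    using regular_semigroup_right_quotient[OF that i uJ(1) G_lim h_pos _ h_lim] X_J
    by (simp add: X_h)
  have "(\<lambda>n. (1 / h n) *\<^sub>R (\<Gamma>1 u (X n) (i (G (X n))) - i (G (X n)))
            - (1 / h n) *\<^sub>R (\<Gamma>2 u (X n) (i (G (X n))) - i (G (X n)))) \<longlonglongrightarrow> 0"
    using tendsto_diff[OF quotients[OF r1] quotients[OF r2]] same_gen uJ by simp
  moreover have "(1 / norm (X n - u)) *\<^sub>R (\<Gamma>1 u (X n) (\<Gamma>2 (X n) t (i x)) - \<Gamma>2 u t (i x))
      = (1 / h n) *\<^sub>R (\<Gamma>1 u (X n) (i (G (X n))) - i (G (X n)))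
        - (1 / h n) *\<^sub>R (\<Gamma>2 u (X n) (i (G (X n))) - i (G (X n)))" for n
  proof -
    have "i (G (X n)) = \<Gamma>2 (X n) t (i x)" using G X_J X_le by auto
    moreover have "\<Gamma>2 u t (i x) = \<Gamma>2 u (X n) (\<Gamma>2 (X n) t (i x))"
      using regular_semigroup_apply_comp[OF r2 uJ(1) X_J uJ(2) X_le] by simp
    moreover have "norm (X n - u) = h n" using h_pos[of n] by (simp add: h_def)
    ultimately show ?thesis by (simp add: algebra_simps)
  qed
  ultimately show "((\<lambda>y. (1 / norm (y - u)) *\<^sub>R (\<Gamma>1 u y (\<Gamma>2 y t (i x)) - \<Gamma>2 u t (i x))) \<circ> X)
                   \<longlonglongrightarrow> 0"
    by (simp add: comp_def)
qed

lemma regular_semigroups_interpolant_has_derivative_zero: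
  fixes i :: "'b::banach \<Rightarrow> 'a::{banach,second_countable_topology}"
  assumes i: "bounded_linear i"
    and r1: "regular_semigroup J i \<Gamma>1" and r2: "regular_semigroup J i \<Gamma>2"
    and same_gen: "\<forall>x. \<forall>t\<in>J. gen J \<Gamma>1 t (i x) = gen J \<Gamma>2 t (i x)"
    and J: "{s..t} \<subseteq> J" and u: "u \<in> {s..t}"
  shows "((\<lambda>v. \<Gamma>1 s v (\<Gamma>2 v t (i x))) has_vector_derivative 0) (at u within {s..t})"
proof -
  define \<phi> where "\<phi> = (\<lambda>v. \<Gamma>1 s v (\<Gamma>2 v t (i x)))"
  define Q where "Q y = (1 / norm (y - u)) *\<^sub>R (\<phi> y - \<phi> u)" for y
  have sut: "s \<in> J" "u \<in> J" "t \<in> J" "s \<le> u" "u \<le> t" using J u by auto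
  define g where "g = \<Gamma>2 u t (i x)"
  have left: "(Q \<longlongrightarrow> 0) (at u within {s..u})"
  proof -
    have quotient_eq: "(1 / norm (y - u)) *\<^sub>R (\<Gamma>1 s y (\<Gamma>2 y u g) - \<Gamma>1 s u g) = Q y"
      if "y \<in> {s..u}" for y
    proof -
      have y: "y \<in> J" "y \<le> u" using that J sut by auto
      show ?thesis
        using regular_semigroup_apply_comp[OF r2 y(1) sut(2,3) y(2) sut(5)]
        by (simp add: Q_def \<phi>_def g_def)
    qed
    have "g \<in> range i" using regular_semigroup_range[OF r2] sut by (simp add: g_def)
    then have "((\<lambda>y. (1 / norm (y - u)) *\<^sub>R (\<Gamma>1 s y (\<Gamma>2 y u g) - \<Gamma>1 s u g)) \<longlongrightarrow> 0)
                 (at u within {s..u})"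
      using J sut by (intro regular_semigroups_left_quotient_vanishes[OF r1 r2 same_gen]) auto
    then show ?thesis by (rule Lim_transform_within[OF _ zero_less_one quotient_eq])
  qed
  have right: "(Q \<longlongrightarrow> 0) (at u within {u..t})"
  proof -
    have quotient_eq:
      "\<Gamma>1 s u ((1 / norm (y - u)) *\<^sub>R (\<Gamma>1 u y (\<Gamma>2 y t (i x)) - \<Gamma>2 u t (i x))) = Q y"
      if "y \<in> {u..t}" for y
    proof -
      have y: "y \<in> J" "u \<le> y" using that J sut by auto
      show ?thesis
        using regular_semigroup_apply_comp[OF r1 sut(1,2) y(1) sut(4) y(2)]
        by (simp add: Q_def \<phi>_def blinfun.diff_right blinfun.scaleR_right)
    qed
    have "((\<lambda>y. (1 / norm (y - u)) *\<^sub>R (\<Gamma>1 u y (\<Gamma>2 y t (i x)) - \<Gamma>2 u t (i x)))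
                     \<longlongrightarrow> 0) (at u within {u..t})"
      using J sut by (intro regular_semigroups_right_quotient_vanishes[OF i r1 r2 same_gen]) auto
    then have "((\<lambda>y. \<Gamma>1 s u ((1 / norm (y - u)) *\<^sub>R (\<Gamma>1 u y (\<Gamma>2 y t (i x)) - \<Gamma>2 u t (i x))))
                 \<longlongrightarrow> 0) (at u within {u..t})"
      using bounded_linear.tendsto[OF blinfun.bounded_linear_right[of "\<Gamma>1 s u"]] by fastforce
    then show ?thesis by (rule Lim_transform_within[OF _ zero_less_one quotient_eq])
  qed
  have "{s..t} = {s..u} \<union> {u..t}" using u by auto
  then have "(Q \<longlongrightarrow> 0) (at u within {s..t})" using left right by (simp add: Lim_within_Un)
  then have "(\<phi> has_vector_derivative 0) (at u within {s..t})"
    unfolding has_vector_derivative_def has_derivative_within Q_def by simp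
  then show ?thesis by (simp only: \<phi>_def)
qed

lemma regular_semigroups_agree_on_Y1:
  fixes i :: "'b::banach \<Rightarrow> 'a::{banach,second_countable_topology}"
  assumes J: "is_interval J" and i: "bounded_linear i"
    and r1: "regular_semigroup J i \<Gamma>1" and r2: "regular_semigroup J i \<Gamma>2"
    and same_gen: "\<forall>x. \<forall>t\<in>J. gen J \<Gamma>1 t (i x) = gen J \<Gamma>2 t (i x)"
    and st: "s \<in> J" "t \<in> J" "s \<le> t"
  shows "\<Gamma>1 s t (i x) = \<Gamma>2 s t (i x)"
proof -
  have interval: "{s..t} \<subseteq> J" using mem_is_interval_1_I[OF J st(1,2)] by auto
  have "((\<lambda>u. \<Gamma>1 s u (\<Gamma>2 u t (i x))) has_vector_derivative 0) (at u within {s..t})"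
    if "u \<in> {s..t}" for u
    using regular_semigroups_interpolant_has_derivative_zero[OF i r1 r2 same_gen interval that] .
  then obtain c where c: "\<And>u. u \<in> {s..t} \<Longrightarrow> \<Gamma>1 s u (\<Gamma>2 u t (i x)) = c"
    using has_vector_derivative_zero_constant[OF convex_real_interval(5)] by blast
  have "\<Gamma>2 s t (i x) = \<Gamma>1 s s (\<Gamma>2 s t (i x))" using regular_semigroup_apply_id[OF r1 st(1)] by simp
  also have "\<dots> = \<Gamma>1 s t (\<Gamma>2 t t (i x))" using c[of s] c[of t] st by simp
  also have "\<dots> = \<Gamma>1 s t (i x)" using regular_semigroup_apply_id[OF r2 st(2)] by simp
  finally show ?thesis by simp
qed

lemma time_interval_is_interval: "time_interval J \<Longrightarrow> is_interval J"
  unfolding time_interval_def by auto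

lemma blinfun_eq_on_dense:
  assumes "closure S = UNIV" and "\<And>y. y \<in> S \<Longrightarrow> blinfun_apply A y = blinfun_apply B y"
  shows "A = B"
proof -
  have "closure S \<subseteq> {y. A y = B y}"
    using assms(2) by (intro closure_minimal closed_Collect_eq continuous_intros) auto
  then show ?thesis using assms(1) by (intro blinfun_eqI) auto
qed

theorem corollary2p11:
  fixes J :: "real set"
    and i :: "'b::{banach,second_countable_topology} \<Rightarrow> 'a::{banach,second_countable_topology}"
    and \<Gamma>1 \<Gamma>2 :: "real \<Rightarrow> real \<Rightarrow> ('a \<Rightarrow>\<^sub>L 'a)"
  assumes "time_interval J"
    and "bounded_linear i" and "inj i"
    and "regular_semigroup J i \<Gamma>1" and "regular_semigroup J i \<Gamma>2"
    and "\<forall>x. \<forall>t\<in>J. gen J \<Gamma>1 t (i x) = gen J \<Gamma>2 t (i x)"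
  shows "(\<forall>s\<in>J. \<forall>t\<in>J. s \<le> t \<longrightarrow>
            (\<forall>x. blinfun_apply (\<Gamma>1 s t) (i x) = blinfun_apply (\<Gamma>2 s t) (i x)))
       \<and> (closure (range i) = UNIV \<longrightarrow>
            (\<forall>s\<in>J. \<forall>t\<in>J. s \<le> t \<longrightarrow> \<Gamma>1 s t = \<Gamma>2 s t))"
proof -
  have on_Y1: "\<forall>s\<in>J. \<forall>t\<in>J. s \<le> t \<longrightarrow> (\<forall>x. \<Gamma>1 s t (i x) = \<Gamma>2 s t (i x))"
    using regular_semigroups_agree_on_Y1[OF time_interval_is_interval assms(2,4,5,6)] assms(1)
    by blast
  moreover have "\<Gamma>1 s t = \<Gamma>2 s t"
    if "closure (range i) = UNIV" "s \<in> J" "t \<in> J" "s \<le> t" for s t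
    using that on_Y1 by (intro blinfun_eq_on_dense[of "range i"]) auto
  ultimately show ?thesis by blast
qed

end
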